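(* Let $A$ be a commutative noetherian ring with $1/2\in A$ and $P$ a projective $A$-module of rank $\ge 2$. The natural map $\mu:\pi_0(\mathbb Q'(P))\to\pi_0(\mathbb Q'(P[T]))$, $[v]\mapsto[v]$, is well defined and bijective.
   Context: For a projective module $P$ over a ring $B$, $\mathbb Q'(P)=\{(p,f,z)\in P\oplus P^*\oplus B: z^2+f(p)=1\}$. $\pi_0(\mathbb Q'(P))$ is the quotient of $\mathbb Q'(P)$ by the equivalence relation generated by: $v_0\sim v_1$ if there is $\Phi(W)\in\mathbb Q'(P[W])$ ($W$ a new variable) with $\Phi(0)=v_0$, $\Phi(1)=v_1$. Elements of $\mathbb Q'(P)$ are regarded in $\mathbb Q'(P[T])$ via base change. *)

theory Defs
  imports "HOL-Computational_Algebra.Polynomial"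
begin

definition is_ideal :: "'a::comm_ring_1 set \<Rightarrow> bool" where
  "is_ideal I \<longleftrightarrow> 0 \<in> I \<and> (\<forall>x\<in>I. \<forall>y\<in>I. x + y \<in> I) \<and> (\<forall>a. \<forall>x\<in>I. a * x \<in> I)"

definition is_prime_ideal :: "'a::comm_ring_1 set \<Rightarrow> bool" where
  "is_prime_ideal I \<longleftrightarrow> is_ideal I \<and> 1 \<notin> I \<and> (\<forall>a b. a * b \<in> I \<longrightarrow> a \<in> I \<or> b \<in> I)"

definition noetherian_ring :: "'a::comm_ring_1 itself \<Rightarrow> bool" where
  "noetherian_ring _ \<longleftrightarrow> (\<forall>I::'a set. is_ideal I \<longrightarrow>
     (\<exists>gs::'a list. I = {\<Sum>i<length gs. c i * gs ! i | c. True}))"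

text \<open>A f.g. projective A-module P is the image of an idempotent n x n matrix e over A,
  i.e. P = {x \<in> A^n. e x = x}. Vectors are functions nat \<Rightarrow> 'b vanishing outside {..<n}.
  For a ring map phi : A \<rightarrow> B, the base change P \<otimes> B is the image of phi(e) in B^n, and its
  dual (P \<otimes> B)^* = Hom_B(P \<otimes> B, B) is identified with row vectors f with f phi(e) = f,
  the pairing being f(p) = \<Sum> f_i p_i.\<close>

definition idempotent_mat :: "nat \<Rightarrow> (nat \<Rightarrow> nat \<Rightarrow> 'a::comm_ring_1) \<Rightarrow> bool" where
  "idempotent_mat n e \<longleftrightarrow> (\<forall>i<n. \<forall>j<n. (\<Sum>k<n. e i k * e k j) = e i j)"

text \<open>Rank of P at a prime p = dim of P \<otimes> k(p) = rank of e over k(p);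
  rank \<ge> 2 iff some 2x2 minor of e is nonzero in k(p), i.e. not in p.\<close>
definition rank_ge2_at :: "nat \<Rightarrow> (nat \<Rightarrow> nat \<Rightarrow> 'a::comm_ring_1) \<Rightarrow> 'a set \<Rightarrow> bool" where
  "rank_ge2_at n e p \<longleftrightarrow> (\<exists>i j k l. i < j \<and> j < n \<and> k < l \<and> l < n \<and>
      e i k * e j l - e i l * e j k \<notin> p)"

definition proj_rank_ge2 :: "nat \<Rightarrow> (nat \<Rightarrow> nat \<Rightarrow> 'a::comm_ring_1) \<Rightarrow> bool" where
  "proj_rank_ge2 n e \<longleftrightarrow> (\<forall>p. is_prime_ideal p \<longrightarrow> rank_ge2_at n e p)"

type_synonym 'b qelem = "(nat \<Rightarrow> 'b) \<times> (nat \<Rightarrow> 'b) \<times> 'b"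

definition Qp :: "('a::comm_ring_1 \<Rightarrow> 'b::comm_ring_1) \<Rightarrow> nat \<Rightarrow> (nat \<Rightarrow> nat \<Rightarrow> 'a) \<Rightarrow> 'b qelem set" where
  "Qp \<phi> n e = {(p, f, z). (\<forall>i. n \<le> i \<longrightarrow> p i = 0 \<and> f i = 0)
      \<and> (\<forall>i<n. p i = (\<Sum>j<n. \<phi> (e i j) * p j))
      \<and> (\<forall>j<n. f j = (\<Sum>i<n. f i * \<phi> (e i j)))
      \<and> z ^ 2 + (\<Sum>i<n. f i * p i) = 1}"

definition qconst :: "'b::comm_ring_1 qelem \<Rightarrow> 'b poly qelem" where
  "qconst v = (case v of (p, f, z) \<Rightarrow> ((\<lambda>i. [:p i:]), (\<lambda>i. [:f i:]), [:z:]))"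

definition qeval :: "'b::comm_ring_1 \<Rightarrow> 'b poly qelem \<Rightarrow> 'b qelem" where
  "qeval c v = (case v of (p, f, z) \<Rightarrow> ((\<lambda>i. poly (p i) c), (\<lambda>i. poly (f i) c), poly z c))"

definition htp :: "('a::comm_ring_1 \<Rightarrow> 'b::comm_ring_1) \<Rightarrow> nat \<Rightarrow> (nat \<Rightarrow> nat \<Rightarrow> 'a) \<Rightarrow> ('b qelem \<times> 'b qelem) set" where
  "htp \<phi> n e = {(v0, v1). \<exists>\<Phi> \<in> Qp (\<lambda>a. [:\<phi> a:]) n e. qeval 0 \<Phi> = v0 \<and> qeval 1 \<Phi> = v1}"

definition pi0_rel :: "('a::comm_ring_1 \<Rightarrow> 'b::comm_ring_1) \<Rightarrow> nat \<Rightarrow> (nat \<Rightarrow> nat \<Rightarrow> 'a) \<Rightarrow> ('b qelem \<times> 'b qelem) set" where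
  "pi0_rel \<phi> n e = ((htp \<phi> n e \<union> (htp \<phi> n e)\<inverse>)\<^sup>*) \<inter> (Qp \<phi> n e \<times> Qp \<phi> n e)"

definition pi0 :: "('a::comm_ring_1 \<Rightarrow> 'b::comm_ring_1) \<Rightarrow> nat \<Rightarrow> (nat \<Rightarrow> nat \<Rightarrow> 'a) \<Rightarrow> 'b qelem set set" where
  "pi0 \<phi> n e = Qp \<phi> n e // pi0_rel \<phi> n e"

abbreviation pi0_P :: "nat \<Rightarrow> (nat \<Rightarrow> nat \<Rightarrow> 'a::comm_ring_1) \<Rightarrow> 'a qelem set set" where
  "pi0_P n e \<equiv> pi0 (\<lambda>a. a) n e"

abbreviation pi0_PT :: "nat \<Rightarrow> (nat \<Rightarrow> nat \<Rightarrow> 'a::comm_ring_1) \<Rightarrow> 'a poly qelem set set" where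
  "pi0_PT n e \<equiv> pi0 (\<lambda>a. [:a:]) n e"

definition mu_cls :: "nat \<Rightarrow> (nat \<Rightarrow> nat \<Rightarrow> 'a::comm_ring_1) \<Rightarrow> 'a qelem \<Rightarrow> 'a poly qelem set" where
  "mu_cls n e v = pi0_rel (\<lambda>a. [:a:]) n e `` {qconst v}"

definition mu :: "nat \<Rightarrow> (nat \<Rightarrow> nat \<Rightarrow> 'a::comm_ring_1) \<Rightarrow> 'a qelem set \<Rightarrow> 'a poly qelem set" where
  "mu n e X = the_elem (mu_cls n e ` X)"

end

theory Submission
  imports Defs
begin

text \<open>
  \<open>Q'\<close> is functorial in ring homomorphisms, and functoriality carries elementary homotopies
  along (apply the homomorphism to the coefficients of polynomials in the homotopy parameter
  \<open>W\<close>). Evaluation at \<open>T = 0\<close> is therefore a left inverse of base change \<open>A \<rightarrow> A[T]\<close> on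
  \<open>\<pi>\<^sub>0\<close>. It is also a right inverse: every \<open>\<Phi>(T) \<in> Q'(P[T])\<close> is joined to the constant
  \<open>\<Phi>(0)\<close> by the homotopy \<open>\<Phi>(WT) \<in> Q'(P[T][W])\<close>. Neither step uses that \<open>A\<close> is noetherian,
  that \<open>2\<close> is invertible or the rank condition.
\<close>

locale comm_ring_hom =
  fixes hom :: "'a::comm_ring_1 \<Rightarrow> 'b::comm_ring_1"
  assumes hom_0: "hom 0 = 0"
    and hom_1: "hom 1 = 1"
    and hom_add: "hom (x + y) = hom x + hom y"
    and hom_mult: "hom (x * y) = hom x * hom y"
begin

lemmas hom_simps = hom_0 hom_1 hom_add hom_mult

lemma hom_sum: "hom (sum f A) = (\<Sum>i\<in>A. hom (f i))"
  by (induction A rule: infinite_finite_induct) (simp_all add: hom_simps)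

lemma hom_power: "hom (x ^ k) = hom x ^ k"
  by (induction k) (simp_all add: hom_simps)

lemma hom_poly: "hom (poly p x) = poly (map_poly hom p) (hom x)"
  by (induction p) (simp_all add: map_poly_pCons hom_simps)

lemma map_poly_hom_const: "map_poly hom [:a:] = [:hom a:]"
  by (simp add: map_poly_pCons hom_0)

lemma comm_ring_hom_map_poly: "comm_ring_hom (map_poly hom)"
proof
  show "map_poly hom 0 = 0" "map_poly hom 1 = 1"
    by (simp_all add: map_poly_hom_const hom_simps)
  show "map_poly hom (p + q) = map_poly hom p + map_poly hom q" for p q
    by (intro poly_eqI) (simp add: coeff_map_poly hom_simps)
  show "map_poly hom (p * q) = map_poly hom p * map_poly hom q" for p q
    by (intro poly_eqI) (simp add: coeff_map_poly coeff_mult hom_simps hom_sum)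
qed

lemma comm_ring_hom_comp:
  assumes "comm_ring_hom hom'"
  shows "comm_ring_hom (\<lambda>x. hom' (hom x))"
  using assms by unfold_locales (simp_all add: comm_ring_hom_def hom_simps)

end

interpretation const_poly: comm_ring_hom "\<lambda>a. [:a:]"
  by unfold_locales simp_all

interpretation poly_eval: comm_ring_hom "\<lambda>p. poly p c"
  by unfold_locales simp_all

definition qmap :: "('b \<Rightarrow> 'c) \<Rightarrow> 'b qelem \<Rightarrow> 'c qelem" where
  "qmap \<psi> v = (case v of (p, f, z) \<Rightarrow> ((\<lambda>i. \<psi> (p i)), (\<lambda>i. \<psi> (f i)), \<psi> z))"

lemma qconst_eq_qmap: "qconst v = qmap (\<lambda>a. [:a:]) v"
  by (cases v) (simp add: qconst_def qmap_def)

lemma qeval_eq_qmap: "qeval c v = qmap (\<lambda>p. poly p c) v"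
  by (cases v) (simp add: qeval_def qmap_def)

lemma qeval_0_qconst: "qeval 0 (qconst v) = v"
  by (cases v) (simp add: qeval_def qconst_def)

context comm_ring_hom
begin

lemma qmap_Qp:
  assumes "v \<in> Qp \<phi> n e"
  shows "qmap hom v \<in> Qp (\<lambda>a. hom (\<phi> a)) n e"
proof -
  obtain p f z where v: "v = (p, f, z)" by (cases v)
  have outside: "\<forall>i. n \<le> i \<longrightarrow> p i = 0 \<and> f i = 0"
    and p_fix: "\<And>i. i < n \<Longrightarrow> p i = (\<Sum>j<n. \<phi> (e i j) * p j)"
    and f_fix: "\<And>j. j < n \<Longrightarrow> f j = (\<Sum>i<n. f i * \<phi> (e i j))"
    and unimodular: "z ^ 2 + (\<Sum>i<n. f i * p i) = 1"
    using assms unfolding v Qp_def mem_Collect_eq prod.case by blast+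
  have "hom (p i) = (\<Sum>j<n. hom (\<phi> (e i j)) * hom (p j))" if "i < n" for i
    using arg_cong[OF p_fix[OF that], of hom] by (simp add: hom_sum hom_mult)
  moreover have "hom (f j) = (\<Sum>i<n. hom (f i) * hom (\<phi> (e i j)))" if "j < n" for j
    using arg_cong[OF f_fix[OF that], of hom] by (simp add: hom_sum hom_mult)
  moreover have "hom z ^ 2 + (\<Sum>i<n. hom (f i) * hom (p i)) = 1"
    using arg_cong[OF unimodular, of hom] by (simp add: hom_simps hom_sum hom_power)
  ultimately show ?thesis
    using outside by (simp add: v qmap_def Qp_def hom_0)
qed

lemma qeval_qmap_map_poly: "qeval (hom c) (qmap (map_poly hom) \<Phi>) = qmap hom (qeval c \<Phi>)"
  by (cases \<Phi>) (simp add: qeval_def qmap_def hom_poly)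

lemma qmap_htp:
  assumes "(v, w) \<in> htp \<phi> n e"
  shows "(qmap hom v, qmap hom w) \<in> htp (\<lambda>a. hom (\<phi> a)) n e"
proof -
  obtain \<Phi> where \<Phi>: "\<Phi> \<in> Qp (\<lambda>a. [:\<phi> a:]) n e" "qeval 0 \<Phi> = v" "qeval 1 \<Phi> = w"
    using assms by (auto simp: htp_def)
  have "qmap (map_poly hom) \<Phi> \<in> Qp (\<lambda>a. [:hom (\<phi> a):]) n e"
    using comm_ring_hom.qmap_Qp[OF comm_ring_hom_map_poly \<Phi>(1)] by (simp add: map_poly_hom_const)
  moreover have "qeval 0 (qmap (map_poly hom) \<Phi>) = qmap hom v"
    and "qeval 1 (qmap (map_poly hom) \<Phi>) = qmap hom w"
    using qeval_qmap_map_poly[of 0 \<Phi>] qeval_qmap_map_poly[of 1 \<Phi>] \<Phi> by (simp_all add: hom_0 hom_1)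
  ultimately show ?thesis by (auto simp: htp_def)
qed

lemma qmap_pi0_rel:
  assumes "(v, w) \<in> pi0_rel \<phi> n e"
  shows "(qmap hom v, qmap hom w) \<in> pi0_rel (\<lambda>a. hom (\<phi> a)) n e"
proof -
  let ?H = "htp \<phi> n e" and ?H' = "htp (\<lambda>a. hom (\<phi> a)) n e"
  have "(v, w) \<in> (?H \<union> ?H\<inverse>)\<^sup>*" and "v \<in> Qp \<phi> n e" "w \<in> Qp \<phi> n e"
    using assms by (auto simp: pi0_rel_def)
  moreover have "(qmap hom x, qmap hom y) \<in> (?H' \<union> ?H'\<inverse>)\<^sup>*" if "(x, y) \<in> (?H \<union> ?H\<inverse>)\<^sup>*" for x y
    using that
  proof (induction rule: rtrancl_induct)
    case (step y z)
    then show ?case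
      using qmap_htp by (blast intro: rtrancl_into_rtrancl)
  qed simp
  ultimately show ?thesis
    by (simp add: pi0_rel_def qmap_Qp)
qed

end

lemma equiv_pi0_rel: "equiv (Qp \<phi> n e) (pi0_rel \<phi> n e)"
proof -
  let ?S = "htp \<phi> n e \<union> (htp \<phi> n e)\<inverse>"
  have "sym (?S\<^sup>*)"
    by (intro sym_rtrancl) (auto simp: sym_def)
  then show ?thesis
    unfolding pi0_rel_def
    by (intro equivI) (auto simp: refl_on_def sym_def trans_def intro: rtrancl_trans)
qed

text \<open>
  \<open>contraction p = p(W T) \<in> A[T][W]\<close>, the outer polynomial variable being \<open>W\<close>.
\<close>
definition contraction :: "'a::comm_ring_1 poly \<Rightarrow> 'a poly poly" where
  "contraction p = poly (map_poly (\<lambda>c. [:[:c:]:]) p) [:0, [:0, 1:]:]"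

interpretation contraction: comm_ring_hom contraction
proof -
  have "comm_ring_hom (\<lambda>c::'a. [:[:c:]:])"
    using const_poly.comm_ring_hom_comp[OF const_poly.comm_ring_hom_axioms] .
  then have "comm_ring_hom (map_poly (\<lambda>c::'a. [:[:c:]:]))"
    by (rule comm_ring_hom.comm_ring_hom_map_poly)
  then have "comm_ring_hom (\<lambda>p. poly (map_poly (\<lambda>c::'a. [:[:c:]:]) p) [:0, [:0, 1:]:])"
    by (rule comm_ring_hom.comm_ring_hom_comp[OF _ poly_eval.comm_ring_hom_axioms])
  then show "comm_ring_hom (contraction :: 'a poly \<Rightarrow> _)"
    by (simp add: contraction_def[abs_def])
qed

lemma contraction_const: "contraction [:a:] = [:[:a:]:]"
  by (simp add: contraction_def map_poly_pCons)

lemma poly_contraction: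
  "poly (contraction p) x = poly (map_poly (\<lambda>c. [:c:]) p) (x * [:0, 1:] :: 'a::comm_ring_1 poly)"
proof -
  have "map_poly (\<lambda>q. poly q x) (map_poly (\<lambda>c. [:[:c:]:]) p) = map_poly (\<lambda>c. [:c:]) p"
    by (simp add: map_poly_map_poly o_def)
  then show ?thesis
    by (simp add: contraction_def poly_eval.hom_poly mult.commute)
qed

lemma poly_map_poly_const_X: "poly (map_poly (\<lambda>c. [:c:]) p) [:0, 1:] = (p :: 'a::comm_ring_1 poly)"
  by (induction p) (simp_all add: map_poly_pCons)

lemma poly_contraction_0: "poly (contraction p) 0 = [:poly p 0:]"
  by (simp add: poly_contraction const_poly.hom_poly)

lemma poly_contraction_1: "poly (contraction p) 1 = p"
  by (simp add: poly_contraction poly_map_poly_const_X)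

lemma htp_qconst_qeval_0:
  assumes "\<Phi> \<in> Qp (\<lambda>a. [:a:]) n e"
  shows "(qconst (qeval 0 \<Phi>), \<Phi>) \<in> htp (\<lambda>a. [:a:]) n e"
proof -
  have "qmap contraction \<Phi> \<in> Qp (\<lambda>a. [:[:a:]:]) n e"
    using contraction.qmap_Qp[OF assms] by (simp add: contraction_const)
  moreover have "qeval 0 (qmap contraction \<Phi>) = qconst (qeval 0 \<Phi>)"
    and "qeval 1 (qmap contraction \<Phi>) = \<Phi>"
    by (cases \<Phi>, simp add: qeval_def qmap_def qconst_def poly_contraction_0 poly_contraction_1)+
  ultimately show ?thesis
    unfolding htp_def by blast
qed

lemma the_elem_image_equiv_class:
  assumes "equiv A R" and "f respects R" and "a \<in> A"
  shows "the_elem (f ` (R `` {a})) = f a"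
proof (rule the_elem_image_unique)
  show "R `` {a} \<noteq> {}"
    using equiv_class_self[OF assms(1,3)] by blast
  show "f a' = f a" if "a' \<in> R `` {a}" for a'
    using that congruentD[OF assms(2)] by auto
qed

lemma bij_betw_quotient_map:
  assumes R: "equiv A R" and S: "equiv B S"
    and c_resp: "\<And>a a'. (a, a') \<in> R \<Longrightarrow> (c a, c a') \<in> S"
    and r_resp: "\<And>b b'. (b, b') \<in> S \<Longrightarrow> (r b, r b') \<in> R"
    and r_c: "\<And>a. r (c a) = a"
    and c_r: "\<And>b. b \<in> B \<Longrightarrow> (c (r b), b) \<in> S"
  shows "(\<lambda>a. S `` {c a}) respects R"
    and "bij_betw (\<lambda>X. the_elem ((\<lambda>a. S `` {c a}) ` X)) (A // R) (B // S)"
proof -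
  let ?F = "\<lambda>a. S `` {c a}"
  show resp: "?F respects R"
    using c_resp equiv_class_eq[OF S] by (blast intro: congruentI)
  note induced = the_elem_image_equiv_class[OF R resp]
  have cB: "c a \<in> B" if "a \<in> A" for a
    using that c_resp equiv_class_self[OF R] equiv_type[OF S] by blast
  have rA: "r b \<in> A" if "b \<in> B" for b
    using that r_resp equiv_class_self[OF S] equiv_type[OF R] by blast
  show "bij_betw (\<lambda>X. the_elem (?F ` X)) (A // R) (B // S)"
  proof (rule bij_betw_imageI)
    show "inj_on (\<lambda>X. the_elem (?F ` X)) (A // R)"
    proof (rule inj_onI)
      fix X X' assume "X \<in> A // R" "X' \<in> A // R"
        and eq: "the_elem (?F ` X) = the_elem (?F ` X')"
      then obtain a a' where a: "a \<in> A" "X = R `` {a}" and a': "a' \<in> A" "X' = R `` {a'}"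
        by (auto elim!: quotientE)
      then have "(c a, c a') \<in> S"
        using eq induced cB eq_equiv_class_iff[OF S] by simp
      then show "X = X'"
        using a a' r_resp r_c equiv_class_eq[OF R] by metis
    qed
    show "(\<lambda>X. the_elem (?F ` X)) ` (A // R) = B // S"
    proof (intro equalityI subsetI)
      fix Y assume "Y \<in> (\<lambda>X. the_elem (?F ` X)) ` (A // R)"
      then show "Y \<in> B // S"
        using induced cB by (auto elim!: quotientE simp: quotientI)
    next
      fix Y assume "Y \<in> B // S"
      then obtain b where b: "b \<in> B" "Y = S `` {b}"
        by (auto elim: quotientE)
      then have "Y = the_elem (?F ` (R `` {r b}))"
        using induced rA equiv_class_eq[OF S c_r] by simp
      then show "Y \<in> (\<lambda>X. the_elem (?F ` X)) ` (A // R)"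
        using rA b by (auto intro: quotientI)
    qed
  qed
qed

lemma qconst_Qp:
  assumes "v \<in> Qp (\<lambda>a. a) n e"
  shows "qconst v \<in> Qp (\<lambda>a. [:a:]) n e"
  using const_poly.qmap_Qp[OF assms] by (simp add: qconst_eq_qmap)

lemma qconst_pi0_rel:
  assumes "(v, w) \<in> pi0_rel (\<lambda>a. a) n e"
  shows "(qconst v, qconst w) \<in> pi0_rel (\<lambda>a. [:a:]) n e"
  using const_poly.qmap_pi0_rel[OF assms] by (simp add: qconst_eq_qmap)

lemma qeval_pi0_rel:
  assumes "(\<Phi>, \<Psi>) \<in> pi0_rel (\<lambda>a. [:a:]) n e"
  shows "(qeval c \<Phi>, qeval c \<Psi>) \<in> pi0_rel (\<lambda>a. a) n e"
  using poly_eval.qmap_pi0_rel[OF assms] by (simp add: qeval_eq_qmap)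

lemma pi0_rel_qconst_qeval_0:
  assumes "\<Phi> \<in> Qp (\<lambda>a. [:a:]) n e"
  shows "(qconst (qeval 0 \<Phi>), \<Phi>) \<in> pi0_rel (\<lambda>a. [:a:]) n e"
proof -
  have "qeval 0 \<Phi> \<in> Qp (\<lambda>a. a) n e"
    using poly_eval.qmap_Qp[OF assms, of 0] by (simp add: qeval_eq_qmap)
  then show ?thesis
    using htp_qconst_qeval_0[OF assms] assms qconst_Qp unfolding pi0_rel_def by blast
qed

theorem lemma4p3:
  fixes n :: nat and e :: "nat \<Rightarrow> nat \<Rightarrow> 'a::comm_ring_1"
  assumes "noetherian_ring TYPE('a)"
    and "\<exists>h::'a. 2 * h = 1"
    and "idempotent_mat n e"
    and "proj_rank_ge2 n e"
  shows "(\<forall>v \<in> Qp (\<lambda>a. a) n e. qconst v \<in> Qp (\<lambda>a. [:a:]) n e)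
    \<and> mu_cls n e respects pi0_rel (\<lambda>a. a) n e
    \<and> bij_betw (mu n e) (pi0_P n e) (pi0_PT n e)"
proof -
  note quotient_map = bij_betw_quotient_map[OF equiv_pi0_rel[of _ n e] equiv_pi0_rel[of _ n e]
      qconst_pi0_rel qeval_pi0_rel qeval_0_qconst pi0_rel_qconst_qeval_0]
  show ?thesis
    unfolding mu_def[abs_def] mu_cls_def[abs_def] pi0_def using qconst_Qp quotient_map by blast
qed

end
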